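(* Let Assumptions (H), (R) and (F) hold, let $X$ be a local diffusion generated by $\mathcal A_t$ on $D$, and let $\Gamma$ be its local transition density on $D$ (a non-negative measurable function $\Gamma(t,x;T,y)$, $0<t<T<T_0$, $x\in\mathbb R^d$, $y\in D$, with $p(t,x;T,A)=\int_A\Gamma(t,x;T,y)dy$ for Borel $A\subseteq D$, continuous in $y\in D$ and bounded on compact subsets of $D$ uniformly in $x\in\mathbb R^d$). Then for all $0<t<T<T_0$ and $\xi\in D$, the function $x\mapsto\Gamma(t,x;T,\xi)$ is bounded and Borel measurable on $\mathbb R^d$, and $$\Gamma(t,x;T,\xi)=E_{t,x}\big[\Gamma(s,X_s;T,\xi)\big],\qquad t<s<T,\ x\in\mathbb R^d.$$
   Context: Fix $T_0>0$, integers $1\le p_0\le d$, a real $d\times d$ matrix $B$, $Y:=\langle Bx,\nabla_x\rangle+\partial_t$. Assumption (H): $\mathrm{rank}\,\mathrm{Lie}(\partial_{x_1},\dots,\partial_{x_{p_0}},Y)=d$. Intrinsic Hölder spaces $C^{n,\alpha}_B(Q)$ for a domain $Q\subseteq\mathbb R^{1+d}$: with $e^{\delta\partial_{x_i}}(t,x)=(t,x+\delta e_i)$, $e^{\delta Y}(t,x)=(t+\delta,e^{\delta B}x)$, $\delta_{(t,x)}$ the sup of $\bar\delta\in]0,1]$ with these points in $Q$ for $|\delta|\le\bar\delta$, $\delta_V=\inf_V\delta_{(t,x)}$; $f\in C^{\alpha_1}_{\partial_{x_i}}(Q)$ (resp. $C^{\alpha_2}_Y(Q)$) if $\sup_{V,0<|\delta|<\delta_V}|f(e^{\delta\partial_{x_i}}(t,x))-f(t,x)|/|\delta|^{\alpha_1}$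 (resp. $|f(e^{\delta Y}(t,x))-f(t,x)|/|\delta|^{\alpha_2/2}$) is finite for every $V\Subset Q$. $C^{0,\alpha}_B=C^\alpha_Y\cap\bigcap_{i\le p_0}C^\alpha_{\partial_{x_i}}$; $C^{1,\alpha}_B$: $f\in C^{1+\alpha}_Y$, $\partial_{x_i}f\in C^{0,\alpha}_B$; $n\ge2$: Lie derivative $Yf$ exists in $C^{n-2,\alpha}_B$ and $\partial_{x_i}f\in C^{n-1,\alpha}_B$ ($i\le p_0$). Markov setting. $X=(X_s)_{s\in[0,T_0[}$ is a continuous strong Markov process on $(\Omega,\mathcal F,(\mathcal F^t_T),(P_{t,x}))$ with transition probability $p(t,x;T,d\xi)$; $E_{t,x}$ is $P_{t,x}$-expectation. $\lim_{T-t\to0^+}$ means the common value of $\lim_{h\to0^+}f(t,t+h)$ and $\lim_{h\to0^+}f(t-h,t)$. $D$ is a domain, $a_{ij}=a_{ji},a_i\in L^\infty_{loc}([0,T_0[\times D)$, $\mathcal A_t=\frac12\sum_{i,j\le p_0}a_{ij}\partial_{x_ix_j}+\sum_{i\le p_0}a_i\partial_{x_i}+\langle Bx,\nabla_x\rangle$. $X$ is a local diffusion generated by $\mathcal A_t$ on $D$ if for all $t\in[0,T_0[$, $\delta>0$, compact $H\subset D$: [Lim-i] $\frac1{T-t}p(t,x;T,\{|\xi-x|>\delta\}\cap H)\to0$ uniformly in $x\in\mathbb R^d$ and $\frac1{T-t}p(t,x;T,\{|\xi-x|>\delta\})\to0$ uniformly in $x\in H$; [Lim-ii] uniformly in $x\in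 H$, $\frac1{T-t}\int_{|\xi-x|<\delta}(\xi-x)_ip(t,x;T,d\xi)\to a_i(t,x)+(Bx)_i$ ($i\le p_0$), $\to(Bx)_i$ ($i>p_0$); $\frac1{T-t}\int_{|\xi-x|<\delta}(\xi-x)_i(\xi-x)_jp(t,x;T,d\xi)\to a_{ij}(t,x)$ ($i,j\le p_0$), $\to0$ otherwise. Assumption (R): there are $N\in\mathbb N_0$, $\alpha\in]0,1]$, $M>0$ with $a_{ij},a_i\in C^{N,\alpha}_B(]0,T_0[\times D)$, all Lie derivatives bounded by $M$, and $M^{-1}|\xi|^2\le\sum_{i,j\le p_0}a_{ij}(t,x)\xi_i\xi_j\le M|\xi|^2$ on $]0,T_0[\times D$. Assumption (F): for every $T\in]0,T_0[$ and every bounded continuous $\varphi$ on $\mathbb R^d$, $(t,x)\mapsto E_{t,x}[\varphi(X_T)]$ is continuous on $]0,T[\times D$. *)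

theory Defs
  imports "HOL-Analysis.Analysis" "HOL-Probability.Probability"
begin

text \<open>Points of R^(1+d) are pairs (t, x) with t real and x in R^d = real^'d.
  The diffusive coordinates x_1..x_p0 are represented by a nonempty index set P.\<close>

type_synonym ('d) st = "real \<times> (real^'d::finite)"

definition lie_bracket :: "(('d::finite) st \<Rightarrow> ('d::finite) st) \<Rightarrow> (('d::finite) st \<Rightarrow> ('d::finite) st) \<Rightarrow> (('d::finite) st \<Rightarrow> ('d::finite) st)" where
  "lie_bracket V W = (\<lambda>z. frechet_derivative W (at z) (V z) - frechet_derivative V (at z) (W z))"

inductive_set lie_alg :: "(('d::finite) st \<Rightarrow> ('d::finite) st) set \<Rightarrow> (('d::finite) st \<Rightarrow> ('d::finite) st) set" for G where
  gen: "V \<in> G \<Longrightarrow> V \<in> lie_alg G"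
| add: "V \<in> lie_alg G \<Longrightarrow> W \<in> lie_alg G \<Longrightarrow> (\<lambda>z. V z + W z) \<in> lie_alg G"
| smul: "V \<in> lie_alg G \<Longrightarrow> (\<lambda>z. c *\<^sub>R V z) \<in> lie_alg G"
| brk: "V \<in> lie_alg G \<Longrightarrow> W \<in> lie_alg G \<Longrightarrow> lie_bracket V W \<in> lie_alg G"

definition dx_field :: "'d \<Rightarrow> ('d::finite) st \<Rightarrow> ('d::finite) st" where
  "dx_field i = (\<lambda>z. (0, axis i 1))"

definition Y_field :: "real^'d^'d \<Rightarrow> ('d::finite) st \<Rightarrow> ('d::finite) st" where
  "Y_field B = (\<lambda>(t, x). (1, B *v x))"

definition hoermander_H :: "'d set \<Rightarrow> real^'d^'d \<Rightarrow> bool" where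
  "hoermander_H P B \<longleftrightarrow>
     (\<forall>z. dim {V z | V. V \<in> lie_alg (insert (Y_field B) (dx_field ` P))} = DIM(('d::finite) st))"

definition mexp :: "real^'d^'d \<Rightarrow> real \<Rightarrow> real^'d \<Rightarrow> real^'d" where
  "mexp B \<delta> x = (\<Sum>k. (\<delta> ^ k / fact k) *\<^sub>R (((*v) B ^^ k) x))"

definition expX :: "'d \<Rightarrow> real \<Rightarrow> ('d::finite) st \<Rightarrow> ('d::finite) st" where
  "expX i \<delta> = (\<lambda>(t, x). (t, x + \<delta> *\<^sub>R axis i 1))"

definition expY :: "real^'d^'d \<Rightarrow> real \<Rightarrow> ('d::finite) st \<Rightarrow> ('d::finite) st" where
  "expY B \<delta> = (\<lambda>(t, x). (t + \<delta>, mexp B \<delta> x))"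

definition delta_pt :: "'d set \<Rightarrow> real^'d^'d \<Rightarrow> ('d::finite) st set \<Rightarrow> ('d::finite) st \<Rightarrow> real" where
  "delta_pt P B Q z = Sup {db. 0 < db \<and> db \<le> 1 \<and>
      (\<forall>\<delta>. \<bar>\<delta>\<bar> \<le> db \<longrightarrow> (\<forall>i\<in>P. expX i \<delta> z \<in> Q) \<and> expY B \<delta> z \<in> Q)}"

definition delta_set :: "'d set \<Rightarrow> real^'d^'d \<Rightarrow> ('d::finite) st set \<Rightarrow> ('d::finite) st set \<Rightarrow> real" where
  "delta_set P B Q V = Inf (delta_pt P B Q ` V)"

definition cpt_sub :: "'a::metric_space set \<Rightarrow> 'a set \<Rightarrow> bool" where
  "cpt_sub V Q \<longleftrightarrow> bounded V \<and> closure V \<subseteq> Q"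

definition holderX :: "'d set \<Rightarrow> real^'d^'d \<Rightarrow> ('d::finite) st set \<Rightarrow> real \<Rightarrow> 'd \<Rightarrow> (('d::finite) st \<Rightarrow> real) \<Rightarrow> bool" where
  "holderX P B Q a i f \<longleftrightarrow> (\<forall>V. cpt_sub V Q \<longrightarrow> (\<exists>C. \<forall>z\<in>V. \<forall>\<delta>.
      0 < \<bar>\<delta>\<bar> \<and> \<bar>\<delta>\<bar> < delta_set P B Q V \<longrightarrow>
      \<bar>f (expX i \<delta> z) - f z\<bar> / \<bar>\<delta>\<bar> powr a \<le> C))"

definition holderY :: "'d set \<Rightarrow> real^'d^'d \<Rightarrow> ('d::finite) st set \<Rightarrow> real \<Rightarrow> (('d::finite) st \<Rightarrow> real) \<Rightarrow> bool" where
  "holderY P B Q a f \<longleftrightarrow> (\<forall>V. cpt_sub V Q \<longrightarrow> (\<exists>C. \<forall>z\<in>V. \<forall>\<delta>.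
      0 < \<bar>\<delta>\<bar> \<and> \<bar>\<delta>\<bar> < delta_set P B Q V \<longrightarrow>
      \<bar>f (expY B \<delta> z) - f z\<bar> / \<bar>\<delta>\<bar> powr (a / 2) \<le> C))"

definition pdx_ex :: "'d \<Rightarrow> (('d::finite) st \<Rightarrow> real) \<Rightarrow> ('d::finite) st \<Rightarrow> bool" where
  "pdx_ex i f z \<longleftrightarrow> (\<lambda>h. f (expX i h z)) differentiable (at 0)"

definition pdx :: "'d \<Rightarrow> (('d::finite) st \<Rightarrow> real) \<Rightarrow> ('d::finite) st \<Rightarrow> real" where
  "pdx i f z = deriv (\<lambda>h. f (expX i h z)) 0"

definition lieY_ex :: "real^'d^'d \<Rightarrow> (('d::finite) st \<Rightarrow> real) \<Rightarrow> ('d::finite) st \<Rightarrow> bool" where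
  "lieY_ex B f z \<longleftrightarrow> (\<lambda>h. f (expY B h z)) differentiable (at 0)"

definition lieY :: "real^'d^'d \<Rightarrow> (('d::finite) st \<Rightarrow> real) \<Rightarrow> ('d::finite) st \<Rightarrow> real" where
  "lieY B f z = deriv (\<lambda>h. f (expY B h z)) 0"

fun CB :: "'d set \<Rightarrow> real^'d^'d \<Rightarrow> ('d::finite) st set \<Rightarrow> real \<Rightarrow> nat \<Rightarrow> (('d::finite) st \<Rightarrow> real) set" where
  "CB P B Q a 0 = {f. holderY P B Q a f \<and> (\<forall>i\<in>P. holderX P B Q a i f)}"
| "CB P B Q a (Suc 0) = {f. holderY P B Q (1 + a) f \<and>
      (\<forall>i\<in>P. (\<forall>z\<in>Q. pdx_ex i f z) \<and> pdx i f \<in> CB P B Q a 0)}"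
| "CB P B Q a (Suc (Suc n)) = {f. (\<forall>z\<in>Q. lieY_ex B f z) \<and> lieY B f \<in> CB P B Q a n \<and>
      (\<forall>i\<in>P. (\<forall>z\<in>Q. pdx_ex i f z) \<and> pdx i f \<in> CB P B Q a (Suc n))}"

fun lie_derivs :: "'d set \<Rightarrow> real^'d^'d \<Rightarrow> nat \<Rightarrow> (('d::finite) st \<Rightarrow> real) \<Rightarrow> (('d::finite) st \<Rightarrow> real) set" where
  "lie_derivs P B 0 f = {f}"
| "lie_derivs P B (Suc 0) f = {f} \<union> (\<lambda>i. pdx i f) ` P"
| "lie_derivs P B (Suc (Suc n)) f = {f} \<union> lie_derivs P B n (lieY B f) \<union>
      (\<Union>i\<in>P. lie_derivs P B (Suc n) (pdx i f))"

definition assumption_R :: "real \<Rightarrow> 'd set \<Rightarrow> real^'d^'d \<Rightarrow> (real^'d) set \<Rightarrow>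
    ('d \<Rightarrow> 'd \<Rightarrow> ('d::finite) st \<Rightarrow> real) \<Rightarrow> ('d \<Rightarrow> ('d::finite) st \<Rightarrow> real) \<Rightarrow> nat \<Rightarrow> real \<Rightarrow> real \<Rightarrow> bool" where
  "assumption_R T0 P B D a b N \<alpha> M \<longleftrightarrow>
     0 < \<alpha> \<and> \<alpha> \<le> 1 \<and> 0 < M \<and>
     (let Q = {0<..<T0} \<times> D in
       (\<forall>i\<in>P. \<forall>j\<in>P. a i j \<in> CB P B Q \<alpha> N \<and> (\<forall>g\<in>lie_derivs P B N (a i j). \<forall>z\<in>Q. \<bar>g z\<bar> \<le> M)) \<and>
       (\<forall>i\<in>P. b i \<in> CB P B Q \<alpha> N \<and> (\<forall>g\<in>lie_derivs P B N (b i). \<forall>z\<in>Q. \<bar>g z\<bar> \<le> M)) \<and>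
       (\<forall>z\<in>Q. \<forall>\<xi>::'d \<Rightarrow> real.
          inverse M * (\<Sum>i\<in>P. (\<xi> i)\<^sup>2) \<le> (\<Sum>i\<in>P. \<Sum>j\<in>P. a i j z * \<xi> i * \<xi> j) \<and>
          (\<Sum>i\<in>P. \<Sum>j\<in>P. a i j z * \<xi> i * \<xi> j) \<le> M * (\<Sum>i\<in>P. (\<xi> i)\<^sup>2)))"

definition trans_prob :: "(real \<Rightarrow> real^'d \<Rightarrow> 'w measure) \<Rightarrow> (real \<Rightarrow> 'w \<Rightarrow> real^'d) \<Rightarrow>
    real \<Rightarrow> real^'d \<Rightarrow> real \<Rightarrow> (real^'d) set \<Rightarrow> real" where
  "trans_prob Pm X t x T A = measure (Pm t x) {\<omega> \<in> space (Pm t x). X T \<omega> \<in> A}"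

definition is_stopping_time :: "real \<Rightarrow> 'w measure \<Rightarrow> (real \<Rightarrow> real \<Rightarrow> 'w measure) \<Rightarrow> real \<Rightarrow> ('w \<Rightarrow> real) \<Rightarrow> bool" where
  "is_stopping_time T0 M Fl t \<tau> \<longleftrightarrow>
     (\<forall>\<omega>\<in>space M. t \<le> \<tau> \<omega> \<and> \<tau> \<omega> < T0) \<and>
     (\<forall>s\<in>{t..<T0}. {\<omega> \<in> space M. \<tau> \<omega> \<le> s} \<in> sets (Fl t s))"

definition stopped_sets :: "real \<Rightarrow> 'w measure \<Rightarrow> (real \<Rightarrow> real \<Rightarrow> 'w measure) \<Rightarrow> real \<Rightarrow> ('w \<Rightarrow> real) \<Rightarrow> 'w set set" where
  "stopped_sets T0 M Fl t \<tau> = {A \<in> sets M. \<forall>s\<in>{t..<T0}. A \<inter> {\<omega> \<in> space M. \<tau> \<omega> \<le> s} \<in> sets (Fl t s)}"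

text \<open>X = (X_s)_{s in [0,T0[} is a continuous strong Markov process on
  (Omega = space M, F = sets M, (F^t_T) = Fl t T, (P_{t,x}) = Pm t x).\<close>
definition cont_strong_markov :: "real \<Rightarrow> 'w measure \<Rightarrow> (real \<Rightarrow> real \<Rightarrow> 'w measure) \<Rightarrow>
    (real \<Rightarrow> real^'d \<Rightarrow> 'w measure) \<Rightarrow> (real \<Rightarrow> 'w \<Rightarrow> real^'d) \<Rightarrow> bool" where
  "cont_strong_markov T0 M Fl Pm X \<longleftrightarrow>
     (\<forall>t\<in>{0..<T0}. \<forall>x. prob_space (Pm t x) \<and> sets (Pm t x) = sets M) \<and>
     (\<forall>t s. 0 \<le> t \<longrightarrow> t \<le> s \<longrightarrow> s < T0 \<longrightarrow> subalgebra M (Fl t s)) \<and>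
     (\<forall>t s r. 0 \<le> t \<longrightarrow> t \<le> s \<longrightarrow> s \<le> r \<longrightarrow> r < T0 \<longrightarrow> sets (Fl t s) \<subseteq> sets (Fl t r)) \<and>
     (\<forall>t s. 0 \<le> t \<longrightarrow> t \<le> s \<longrightarrow> s < T0 \<longrightarrow> X s \<in> measurable (Fl t s) borel) \<and>
     (\<forall>\<omega>\<in>space M. continuous_on {0..<T0} (\<lambda>s. X s \<omega>)) \<and>
     (\<forall>t\<in>{0..<T0}. \<forall>x. AE \<omega> in Pm t x. X t \<omega> = x) \<and>
     (\<forall>t\<in>{0..<T0}. \<forall>T\<in>{t..<T0}. \<forall>A\<in>sets borel.
        (\<lambda>x. trans_prob Pm X t x T A) \<in> borel_measurable borel) \<and>
     (\<forall>t\<in>{0..<T0}. \<forall>x \<tau>. is_stopping_time T0 M Fl t \<tau> \<longrightarrow>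
        (\<forall>T\<in>{t..<T0}. \<forall>A\<in>sets borel. \<forall>C\<in>stopped_sets T0 M Fl t \<tau>.
          measure (Pm t x) (C \<inter> {\<omega> \<in> space M. \<tau> \<omega> \<le> T \<and> X T \<omega> \<in> A}) =
          (\<integral>\<omega>\<in>C \<inter> {\<omega> \<in> space M. \<tau> \<omega> \<le> T}. trans_prob Pm X (\<tau> \<omega>) (X (\<tau> \<omega>) \<omega>) T A \<partial>(Pm t x))))"

text \<open>lim_{T-t -> 0+} F(t,T,x) = L(x) uniformly in x in S: both the limit h->0+ of F(t,t+h,x)
  and (when t > 0, so that t-h is an admissible time) of F(t-h,t,x).\<close>
definition tlim :: "real \<Rightarrow> 'a set \<Rightarrow> (real \<Rightarrow> real \<Rightarrow> 'a \<Rightarrow> real) \<Rightarrow> ('a \<Rightarrow> real) \<Rightarrow> bool" where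
  "tlim t S F L \<longleftrightarrow> uniform_limit S (\<lambda>h x. F t (t + h) x) L (at_right 0) \<and>
      (0 < t \<longrightarrow> uniform_limit S (\<lambda>h x. F (t - h) t x) L (at_right 0))"

definition Linf_loc :: "'a::topological_space set \<Rightarrow> ('a \<Rightarrow> real) \<Rightarrow> bool" where
  "Linf_loc S f \<longleftrightarrow> f \<in> borel_measurable (restrict_space borel S) \<and>
      (\<forall>K. compact K \<longrightarrow> K \<subseteq> S \<longrightarrow> bounded (f ` K))"

text \<open>X is a local diffusion generated by A_t = 1/2 sum a_ij d_ij + sum b_i d_i + <Bx,grad> on D
  (a = (a_ij), b = (a_i) the drift; only indices in P are relevant).\<close>
definition local_diffusion :: "real \<Rightarrow> (real \<Rightarrow> real^'d \<Rightarrow> 'w measure) \<Rightarrow> (real \<Rightarrow> 'w \<Rightarrow> real^'d) \<Rightarrow>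
    'd set \<Rightarrow> real^'d^'d \<Rightarrow> (real^'d) set \<Rightarrow> ('d \<Rightarrow> 'd \<Rightarrow> ('d::finite) st \<Rightarrow> real) \<Rightarrow> ('d \<Rightarrow> ('d::finite) st \<Rightarrow> real) \<Rightarrow> bool" where
  "local_diffusion T0 Pm X P B D a b \<longleftrightarrow>
     (\<forall>i\<in>P. \<forall>j\<in>P. a i j = a j i) \<and>
     (\<forall>i\<in>P. \<forall>j\<in>P. Linf_loc ({0..<T0} \<times> D) (a i j)) \<and>
     (\<forall>i\<in>P. Linf_loc ({0..<T0} \<times> D) (b i)) \<and>
     (\<forall>t\<in>{0..<T0}. \<forall>\<delta>>0. \<forall>H. compact H \<and> H \<subseteq> D \<longrightarrow>
        tlim t UNIV (\<lambda>s T x. trans_prob Pm X s x T ({\<xi>. norm (\<xi> - x) > \<delta>} \<inter> H) / (T - s)) (\<lambda>x. 0) \<and>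
        tlim t H (\<lambda>s T x. trans_prob Pm X s x T {\<xi>. norm (\<xi> - x) > \<delta>} / (T - s)) (\<lambda>x. 0) \<and>
        (\<forall>i. tlim t H
           (\<lambda>s T x. (\<integral>\<omega>. indicator {\<xi>. norm (\<xi> - x) < \<delta>} (X T \<omega>) * (X T \<omega> - x) $ i \<partial>(Pm s x)) / (T - s))
           (\<lambda>x. (if i \<in> P then b i (t, x) else 0) + (B *v x) $ i)) \<and>
        (\<forall>i j. tlim t H
           (\<lambda>s T x. (\<integral>\<omega>. indicator {\<xi>. norm (\<xi> - x) < \<delta>} (X T \<omega>) *
                 (X T \<omega> - x) $ i * (X T \<omega> - x) $ j \<partial>(Pm s x)) / (T - s))
           (\<lambda>x. if i \<in> P \<and> j \<in> P then a i j (t, x) else 0)))"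

definition assumption_F :: "real \<Rightarrow> (real \<Rightarrow> real^'d \<Rightarrow> 'w measure) \<Rightarrow> (real \<Rightarrow> 'w \<Rightarrow> real^'d) \<Rightarrow> (real^'d) set \<Rightarrow> bool" where
  "assumption_F T0 Pm X D \<longleftrightarrow>
     (\<forall>T\<in>{0<..<T0}. \<forall>\<phi>::real^'d \<Rightarrow> real. continuous_on UNIV \<phi> \<and> bounded (range \<phi>) \<longrightarrow>
        continuous_on ({0<..<T} \<times> D) (\<lambda>(t, x). \<integral>\<omega>. \<phi> (X T \<omega>) \<partial>(Pm t x)))"

definition local_density :: "real \<Rightarrow> (real \<Rightarrow> real^'d \<Rightarrow> 'w measure) \<Rightarrow> (real \<Rightarrow> 'w \<Rightarrow> real^'d) \<Rightarrow> (real^'d) set \<Rightarrow>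
    (real \<Rightarrow> real^'d \<Rightarrow> real \<Rightarrow> real^'d \<Rightarrow> real) \<Rightarrow> bool" where
  "local_density T0 Pm X D \<Gamma> \<longleftrightarrow>
     (\<forall>t T. 0 < t \<longrightarrow> t < T \<longrightarrow> T < T0 \<longrightarrow>
        (\<forall>x y. y \<in> D \<longrightarrow> 0 \<le> \<Gamma> t x T y) \<and>
        (\<forall>x. \<Gamma> t x T \<in> borel_measurable (restrict_space borel D)) \<and>
        (\<forall>x. \<forall>A\<in>sets borel. A \<subseteq> D \<longrightarrow>
           ennreal (trans_prob Pm X t x T A) = (\<integral>\<^sup>+ y\<in>A. ennreal (\<Gamma> t x T y) \<partial>lborel)) \<and>
        (\<forall>x. continuous_on D (\<Gamma> t x T)) \<and>
        (\<forall>K. compact K \<longrightarrow> K \<subseteq> D \<longrightarrow> (\<exists>C. \<forall>x. \<forall>y\<in>K. \<Gamma> t x T y \<le> C)))"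

end

theory Submission
  imports Defs
begin

(* Gamma(s,.;T,xi) is the pointwise limit, as r -> 0+, of the ball averages
   p(s,.;T,B_r(xi)) / |B_r(xi)|, because Gamma(s,x;T,.) is continuous at xi.  These averages are
   Borel in x, bounded uniformly in x once the closed ball lies in D, and satisfy the
   Chapman-Kolmogorov identity by the strong Markov property at the deterministic time s.
   Passing to the limit (by dominated convergence for the identity) gives the three claims. *)

definition ball_average :: "('a::euclidean_space set \<Rightarrow> real) \<Rightarrow> 'a \<Rightarrow> real \<Rightarrow> real" where
  "ball_average \<mu> \<xi> r = \<mu> (ball \<xi> r) / measure lborel (ball \<xi> r)"

lemma density_eq_set_integral:
  fixes f :: "'a::euclidean_space \<Rightarrow> real"
  assumes f_meas: "f \<in> borel_measurable (restrict_space borel D)" and D: "D \<in> sets borel"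
    and A: "A \<in> sets borel" "A \<subseteq> D" "emeasure lborel A < \<infinity>"
    and f_bounds: "\<forall>y\<in>A. 0 \<le> f y \<and> f y \<le> C"
    and density: "ennreal p = (\<integral>\<^sup>+y\<in>A. ennreal (f y) \<partial>lborel)" and "0 \<le> p"
  shows "set_integrable lborel A f" and "p = (\<integral>y\<in>A. f y \<partial>lborel)"
proof -
  have "set_borel_measurable lborel D f"
    using f_meas D by (simp add: set_borel_measurable_def borel_measurable_restrict_space_iff)
  then have "set_borel_measurable lborel A f"
    by (rule set_borel_measurable_subset) (use A in auto)
  then show integrable: "set_integrable lborel A f"
    unfolding set_integrable_def set_borel_measurable_def
    using A f_bounds by (intro integrableI_bounded_set[where A = A and B = C]) (auto intro!: AE_I2)
  have "ennreal p = (\<integral>\<^sup>+y. ennreal (indicator A y *\<^sub>R f y) \<partial>lborel)"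
    unfolding density by (rule nn_integral_cong) (simp split: split_indicator)
  also have "\<dots> = ennreal (\<integral>y\<in>A. f y \<partial>lborel)"
    unfolding set_lebesgue_integral_def using integrable f_bounds
    by (intro nn_integral_eq_integral) (auto simp: set_integrable_def intro!: AE_I2 split: split_indicator)
  finally show "p = (\<integral>y\<in>A. f y \<partial>lborel)"
    using \<open>0 \<le> p\<close> f_bounds
    by (subst (asm) ennreal_inj) (auto simp: set_lebesgue_integral_def intro!: integral_nonneg_AE AE_I2 split: split_indicator)
qed

lemma ball_average_set_integral_le:
  fixes f :: "'a::euclidean_space \<Rightarrow> real"
  assumes "set_integrable lborel (ball \<xi> r) f" "0 < r" "\<forall>y\<in>ball \<xi> r. f y \<le> C"
  shows "ball_average (\<lambda>A. \<integral>y\<in>A. f y \<partial>lborel) \<xi> r \<le> C"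
proof -
  have finite: "emeasure lborel (ball \<xi> r) < \<infinity>" by (rule emeasure_bounded_finite) simp
  have "(\<integral>y\<in>ball \<xi> r. f y \<partial>lborel) \<le> (\<integral>y\<in>ball \<xi> r. C \<partial>lborel)"
    using assms finite by (intro set_integral_mono) (auto simp: set_integrable_def integrable_real_indicator)
  also have "\<dots> = C * measure lborel (ball \<xi> r)"
    using finite by (simp add: set_integral_const)
  finally show ?thesis
    using \<open>0 < r\<close> by (simp add: ball_average_def divide_le_eq)
qed

lemma ball_average_set_integral_dist:
  fixes f :: "'a::euclidean_space \<Rightarrow> real"
  assumes "set_integrable lborel (ball \<xi> r) f" "0 < r" "\<forall>y\<in>ball \<xi> r. \<bar>f y - c\<bar> \<le> \<epsilon>"
  shows "\<bar>ball_average (\<lambda>A. \<integral>y\<in>A. f y \<partial>lborel) \<xi> r - c\<bar> \<le> \<epsilon>"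
proof -
  let ?B = "ball \<xi> r"
  have finite: "emeasure lborel ?B < \<infinity>" by (rule emeasure_bounded_finite) simp
  then have const: "set_integrable lborel ?B (\<lambda>_. c)" "set_integrable lborel ?B (\<lambda>_. \<epsilon>)"
    by (simp_all add: set_integrable_def integrable_real_indicator)
  have "\<bar>(\<integral>y\<in>?B. f y \<partial>lborel) - c * measure lborel ?B\<bar> = \<bar>\<integral>y\<in>?B. f y - c \<partial>lborel\<bar>"
    using assms(1) const finite by (simp add: set_integral_diff set_integral_const ac_simps)
  also have "\<dots> \<le> (\<integral>y\<in>?B. \<bar>f y - c\<bar> \<partial>lborel)"
    using set_integral_norm_bound[of lborel ?B "\<lambda>y. f y - c"] assms(1) const by simp
  also have "\<dots> \<le> (\<integral>y\<in>?B. \<epsilon> \<partial>lborel)"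
    using assms const by (intro set_integral_mono set_integrable_abs) auto
  also have "\<dots> = \<epsilon> * measure lborel ?B"
    using finite by (simp add: set_integral_const)
  finally have "\<bar>(\<integral>y\<in>?B. f y \<partial>lborel) - c * measure lborel ?B\<bar> \<le> \<epsilon> * measure lborel ?B" .
  moreover have pos: "0 < measure lborel ?B"
    using \<open>0 < r\<close> by simp
  moreover have "ball_average (\<lambda>A. \<integral>y\<in>A. f y \<partial>lborel) \<xi> r - c
      = ((\<integral>y\<in>?B. f y \<partial>lborel) - c * measure lborel ?B) / measure lborel ?B"
    using pos by (simp add: ball_average_def field_simps)
  ultimately show ?thesis
    by (simp add: abs_divide divide_le_eq)
qed

lemma ball_average_set_integral_tendsto:
  fixes f :: "'a::euclidean_space \<Rightarrow> real"
  assumes "isCont f \<xi>" and "\<forall>\<^sub>F r in at_right 0. set_integrable lborel (ball \<xi> r) f"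
  shows "((\<lambda>r. ball_average (\<lambda>A. \<integral>y\<in>A. f y \<partial>lborel) \<xi> r) \<longlongrightarrow> f \<xi>) (at_right 0)"
proof (rule tendstoI)
  fix \<epsilon> :: real assume "0 < \<epsilon>"
  then obtain \<delta> where "0 < \<delta>" and \<delta>: "\<And>y. dist y \<xi> < \<delta> \<Longrightarrow> dist (f y) (f \<xi>) < \<epsilon> / 2"
    using \<open>isCont f \<xi>\<close> half_gt_zero unfolding continuous_at_eps_delta by metis
  have "\<forall>\<^sub>F r in at_right 0. 0 < r \<and> r < \<delta>"
    using eventually_at_right_real[OF \<open>0 < \<delta>\<close>] by simp
  with assms(2) show "\<forall>\<^sub>F r in at_right 0. dist (ball_average (\<lambda>A. \<integral>y\<in>A. f y \<partial>lborel) \<xi> r) (f \<xi>) < \<epsilon>"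
  proof eventually_elim
    case (elim r)
    have "\<forall>y\<in>ball \<xi> r. \<bar>f y - f \<xi>\<bar> \<le> \<epsilon> / 2"
    proof
      fix y assume "y \<in> ball \<xi> r"
      then have "dist y \<xi> < \<delta>"
        using elim by (simp add: dist_commute)
      then show "\<bar>f y - f \<xi>\<bar> \<le> \<epsilon> / 2"
        using \<delta> by (fastforce simp: dist_real_def)
    qed
    with elim have "\<bar>ball_average (\<lambda>A. \<integral>y\<in>A. f y \<partial>lborel) \<xi> r - f \<xi>\<bar> \<le> \<epsilon> / 2"
      by (intro ball_average_set_integral_dist) auto
    with \<open>0 < \<epsilon>\<close> show ?case
      by (simp add: dist_real_def)
  qed
qed

lemma filterlim_divide_Suc_at_right:
  fixes e :: real
  assumes "0 < e"
  shows "filterlim (\<lambda>n. e / real (Suc n)) (at_right 0) sequentially"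
proof (rule tendsto_imp_filterlim_at_right)
  show "(\<lambda>n. e / real (Suc n)) \<longlonglongrightarrow> 0"
    using tendsto_mult_right_zero[OF LIMSEQ_inverse_real_of_nat, of e] by (simp add: divide_inverse)
  show "\<forall>\<^sub>F n in sequentially. 0 < e / real (Suc n)"
    using assms by simp
qed

lemma cont_strong_markovD:
  assumes "cont_strong_markov T0 M Fl Pm X"
  shows "\<And>t x. 0 \<le> t \<Longrightarrow> t < T0 \<Longrightarrow> prob_space (Pm t x)"
    and "\<And>t x. 0 \<le> t \<Longrightarrow> t < T0 \<Longrightarrow> sets (Pm t x) = sets M"
    and "\<And>t s. 0 \<le> t \<Longrightarrow> t \<le> s \<Longrightarrow> s < T0 \<Longrightarrow> subalgebra M (Fl t s)"
    and "\<And>t s. 0 \<le> t \<Longrightarrow> t \<le> s \<Longrightarrow> s < T0 \<Longrightarrow> X s \<in> borel_measurable (Fl t s)"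
    and "\<And>t T A. t \<in> {0..<T0} \<Longrightarrow> T \<in> {t..<T0} \<Longrightarrow> A \<in> sets borel \<Longrightarrow>
      (\<lambda>x. trans_prob Pm X t x T A) \<in> borel_measurable borel"
    and "\<And>t x \<tau> T A C. t \<in> {0..<T0} \<Longrightarrow> is_stopping_time T0 M Fl t \<tau> \<Longrightarrow> T \<in> {t..<T0} \<Longrightarrow>
      A \<in> sets borel \<Longrightarrow> C \<in> stopped_sets T0 M Fl t \<tau> \<Longrightarrow>
      measure (Pm t x) (C \<inter> {\<omega> \<in> space M. \<tau> \<omega> \<le> T \<and> X T \<omega> \<in> A}) =
      (\<integral>\<omega>\<in>C \<inter> {\<omega> \<in> space M. \<tau> \<omega> \<le> T}. trans_prob Pm X (\<tau> \<omega>) (X (\<tau> \<omega>) \<omega>) T A \<partial>Pm t x)"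
  using assms unfolding cont_strong_markov_def by simp_all

lemma cont_strong_markov_space_filtration:
  assumes "cont_strong_markov T0 M Fl Pm X" "0 \<le> t" "t \<le> r" "r < T0"
  shows "space (Fl t r) = space M"
  using cont_strong_markovD(3)[OF assms] unfolding subalgebra_def by blast

lemma cont_strong_markov_const_stopping_time:
  assumes markov: "cont_strong_markov T0 M Fl Pm X" and s: "0 \<le> t" "t \<le> s" "s < T0"
  shows "is_stopping_time T0 M Fl t (\<lambda>_. s)" and "space M \<in> stopped_sets T0 M Fl t (\<lambda>_. s)"
proof -
  have events: "{\<omega> \<in> space M. s \<le> r} \<in> sets (Fl t r)" if "r \<in> {t..<T0}" for r
  proof (cases "s \<le> r")
    case True
    have "space (Fl t r) = space M"
      using that cont_strong_markov_space_filtration[OF markov \<open>0 \<le> t\<close>, of r] by simp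
    then show ?thesis
      using True sets.top[of "Fl t r"] by simp
  qed simp
  show "is_stopping_time T0 M Fl t (\<lambda>_. s)"
    unfolding is_stopping_time_def using s events by blast
  show "space M \<in> stopped_sets T0 M Fl t (\<lambda>_. s)"
    unfolding stopped_sets_def
  proof (intro CollectI conjI ballI)
    show "space M \<in> sets M"
      by (rule sets.top)
    fix r assume "r \<in> {t..<T0}"
    moreover have "space M \<inter> {\<omega> \<in> space M. s \<le> r} = {\<omega> \<in> space M. s \<le> r}"
      by blast
    ultimately show "space M \<inter> {\<omega> \<in> space M. s \<le> r} \<in> sets (Fl t r)"
      using events by (simp only:)
  qed
qed

lemma cont_strong_markov_measurable:
  assumes markov: "cont_strong_markov T0 M Fl Pm X" and "0 \<le> t" "t \<le> s" "s < T0"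
  shows "X s \<in> borel_measurable (Pm t x)"
proof -
  have "X s \<in> borel_measurable M"
    using cont_strong_markovD(3,4)[OF assms] by (rule measurable_from_subalg)
  moreover have "sets (Pm t x) = sets M"
    using cont_strong_markovD(2)[OF markov] assms(2-) by simp
  ultimately show ?thesis
    using measurable_cong_sets[OF _ refl] by blast
qed

lemma cont_strong_markov_chapman_kolmogorov:
  assumes markov: "cont_strong_markov T0 M Fl Pm X" and times: "0 \<le> t" "t \<le> s" "s \<le> T" "T < T0"
    and "A \<in> sets borel"
  shows "trans_prob Pm X t x T A = (\<integral>\<omega>. trans_prob Pm X s (X s \<omega>) T A \<partial>Pm t x)"
proof -
  have space: "space (Pm t x) = space M"
    using cont_strong_markovD(2)[OF markov] times by (intro sets_eq_imp_space_eq) simp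
  have events: "space M \<inter> {\<omega> \<in> space M. s \<le> T \<and> X T \<omega> \<in> A} = {\<omega> \<in> space (Pm t x). X T \<omega> \<in> A}"
    "space M \<inter> {\<omega> \<in> space M. s \<le> T} = space (Pm t x)"
    using \<open>s \<le> T\<close> unfolding space by blast+
  have "s < T0" "t \<in> {0..<T0}" "T \<in> {t..<T0}"
    using times by auto
  note stopping = cont_strong_markov_const_stopping_time[OF markov \<open>0 \<le> t\<close> \<open>t \<le> s\<close> \<open>s < T0\<close>]
  have "trans_prob Pm X t x T A = measure (Pm t x) (space M \<inter> {\<omega> \<in> space M. s \<le> T \<and> X T \<omega> \<in> A})"
    unfolding trans_prob_def events ..
  also have "\<dots> = (\<integral>\<omega>\<in>space M \<inter> {\<omega> \<in> space M. s \<le> T}. trans_prob Pm X s (X s \<omega>) T A \<partial>Pm t x)"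
    by (rule cont_strong_markovD(6)[OF markov \<open>t \<in> {0..<T0}\<close> stopping(1) \<open>T \<in> {t..<T0}\<close> \<open>A \<in> sets borel\<close> stopping(2)])
  also have "\<dots> = (\<integral>\<omega>. trans_prob Pm X s (X s \<omega>) T A \<partial>Pm t x)"
    unfolding events(2) set_lebesgue_integral_def
    by (intro Bochner_Integration.integral_cong) auto
  finally show ?thesis .
qed

lemma local_densityD:
  assumes "local_density T0 Pm X D \<Gamma>" "0 < s" "s < T" "T < T0"
  shows "\<And>x y. y \<in> D \<Longrightarrow> 0 \<le> \<Gamma> s x T y"
    and "\<And>x. \<Gamma> s x T \<in> borel_measurable (restrict_space borel D)"
    and "\<And>x A. A \<in> sets borel \<Longrightarrow> A \<subseteq> D \<Longrightarrow>
      ennreal (trans_prob Pm X s x T A) = (\<integral>\<^sup>+y\<in>A. ennreal (\<Gamma> s x T y) \<partial>lborel)"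
    and "\<And>x. continuous_on D (\<Gamma> s x T)"
    and "\<And>K. compact K \<Longrightarrow> K \<subseteq> D \<Longrightarrow> \<exists>C. \<forall>x. \<forall>y\<in>K. \<Gamma> s x T y \<le> C"
  using assms unfolding local_density_def by simp_all

lemma local_density_trans_prob_ball:
  assumes dens: "local_density T0 Pm X D \<Gamma>" and "open D" and s: "0 < s" "s < T" "T < T0"
    and "cball \<xi> r \<subseteq> D"
  shows "set_integrable lborel (ball \<xi> r) (\<Gamma> s x T)"
    and "trans_prob Pm X s x T (ball \<xi> r) = (\<integral>y\<in>ball \<xi> r. \<Gamma> s x T y \<partial>lborel)"
proof -
  obtain C where C: "\<forall>x. \<forall>y\<in>cball \<xi> r. \<Gamma> s x T y \<le> C"
    using local_densityD(5)[OF dens s compact_cball \<open>cball \<xi> r \<subseteq> D\<close>] by blast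
  have ball: "ball \<xi> r \<subseteq> D"
    using \<open>cball \<xi> r \<subseteq> D\<close> by auto
  have finite: "emeasure lborel (ball \<xi> r) < \<infinity>"
    by (rule emeasure_bounded_finite) simp
  have bounds: "\<forall>y\<in>ball \<xi> r. 0 \<le> \<Gamma> s x T y \<and> \<Gamma> s x T y \<le> C"
    using C ball local_densityD(1)[OF dens s] by auto
  have "ennreal (trans_prob Pm X s x T (ball \<xi> r)) = (\<integral>\<^sup>+y\<in>ball \<xi> r. ennreal (\<Gamma> s x T y) \<partial>lborel)"
    using local_densityD(3)[OF dens s] ball by simp
  from density_eq_set_integral[OF local_densityD(2)[OF dens s] _ _ ball finite bounds this]
  show "set_integrable lborel (ball \<xi> r) (\<Gamma> s x T)"
    and "trans_prob Pm X s x T (ball \<xi> r) = (\<integral>y\<in>ball \<xi> r. \<Gamma> s x T y \<partial>lborel)"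
    using \<open>open D\<close> by (simp_all add: trans_prob_def)
qed

lemma local_density_ball_average_tendsto:
  assumes dens: "local_density T0 Pm X D \<Gamma>" and "open D" "\<xi> \<in> D" and s: "0 < s" "s < T" "T < T0"
  shows "((\<lambda>r. ball_average (trans_prob Pm X s x T) \<xi> r) \<longlongrightarrow> \<Gamma> s x T \<xi>) (at_right 0)"
proof -
  obtain e where "0 < e" "cball \<xi> e \<subseteq> D"
    using \<open>open D\<close> \<open>\<xi> \<in> D\<close> open_contains_cball by blast
  then have small: "\<forall>\<^sub>F r in at_right 0. cball \<xi> r \<subseteq> D"
    using eventually_at_right_real[OF \<open>0 < e\<close>] by (auto elim!: eventually_mono)
  have "isCont (\<Gamma> s x T) \<xi>"
    using local_densityD(4)[OF dens s] \<open>open D\<close> \<open>\<xi> \<in> D\<close> by (simp add: continuous_on_eq_continuous_at)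
  moreover have "\<forall>\<^sub>F r in at_right 0. set_integrable lborel (ball \<xi> r) (\<Gamma> s x T)"
    using small by eventually_elim (rule local_density_trans_prob_ball(1)[OF dens \<open>open D\<close> s])
  ultimately have "((\<lambda>r. ball_average (\<lambda>A. \<integral>y\<in>A. \<Gamma> s x T y \<partial>lborel) \<xi> r) \<longlongrightarrow> \<Gamma> s x T \<xi>) (at_right 0)"
    by (rule ball_average_set_integral_tendsto)
  moreover have "\<forall>\<^sub>F r in at_right 0.
      ball_average (\<lambda>A. \<integral>y\<in>A. \<Gamma> s x T y \<partial>lborel) \<xi> r = ball_average (trans_prob Pm X s x T) \<xi> r"
    using small by eventually_elim
      (simp add: ball_average_def local_density_trans_prob_ball(2)[OF dens \<open>open D\<close> s])
  ultimately show ?thesis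
    by (rule Lim_transform_eventually)
qed

lemma local_density_ball_average_bounded:
  assumes dens: "local_density T0 Pm X D \<Gamma>" and "open D" and s: "0 < s" "s < T" "T < T0"
    and "cball \<xi> e \<subseteq> D"
  obtains C where "\<And>x r. 0 < r \<Longrightarrow> r \<le> e \<Longrightarrow> norm (ball_average (trans_prob Pm X s x T) \<xi> r) \<le> C"
proof -
  obtain C where C: "\<forall>x. \<forall>y\<in>cball \<xi> e. \<Gamma> s x T y \<le> C"
    using local_densityD(5)[OF dens s compact_cball \<open>cball \<xi> e \<subseteq> D\<close>] by blast
  have "norm (ball_average (trans_prob Pm X s x T) \<xi> r) \<le> C" if "0 < r" "r \<le> e" for x r
  proof -
    have "cball \<xi> r \<subseteq> D" "\<forall>y\<in>ball \<xi> r. \<Gamma> s x T y \<le> C"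
      using \<open>r \<le> e\<close> \<open>cball \<xi> e \<subseteq> D\<close> C by auto
    then have "ball_average (trans_prob Pm X s x T) \<xi> r \<le> C"
      using ball_average_set_integral_le[of \<xi> r "\<Gamma> s x T" C] \<open>0 < r\<close>
      by (simp add: ball_average_def local_density_trans_prob_ball[OF dens \<open>open D\<close> s])
    moreover have "0 \<le> ball_average (trans_prob Pm X s x T) \<xi> r"
      by (simp add: ball_average_def trans_prob_def)
    ultimately show ?thesis
      by simp
  qed
  then show ?thesis
    using that by blast
qed

lemma cont_strong_markov_ball_average_measurable:
  assumes markov: "cont_strong_markov T0 M Fl Pm X" and "0 \<le> s" "s \<le> T" "T < T0"
  shows "(\<lambda>x. ball_average (trans_prob Pm X s x T) \<xi> r) \<in> borel_measurable borel"
proof -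
  have "(\<lambda>x. trans_prob Pm X s x T (ball \<xi> r)) \<in> borel_measurable borel"
    using assms(2-) by (intro cont_strong_markovD(5)[OF markov]) auto
  then show ?thesis
    unfolding ball_average_def by measurable
qed

lemma local_density_borel_measurable:
  assumes markov: "cont_strong_markov T0 M Fl Pm X" and dens: "local_density T0 Pm X D \<Gamma>"
    and "open D" "\<xi> \<in> D" and s: "0 < s" "s < T" "T < T0"
  shows "(\<lambda>x. \<Gamma> s x T \<xi>) \<in> borel_measurable borel"
proof (rule borel_measurable_LIMSEQ_real)
  show "(\<lambda>n. ball_average (trans_prob Pm X s x T) \<xi> (1 / real (Suc n))) \<longlonglongrightarrow> \<Gamma> s x T \<xi>" for x
    using local_density_ball_average_tendsto[OF dens \<open>open D\<close> \<open>\<xi> \<in> D\<close> s]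
    by (rule filterlim_compose) (rule filterlim_divide_Suc_at_right, simp)
  show "(\<lambda>x. ball_average (trans_prob Pm X s x T) \<xi> (1 / real (Suc n))) \<in> borel_measurable borel" for n
    using s by (intro cont_strong_markov_ball_average_measurable[OF markov]) auto
qed

lemma local_density_bounded:
  assumes dens: "local_density T0 Pm X D \<Gamma>" and "\<xi> \<in> D" and s: "0 < s" "s < T" "T < T0"
  shows "bounded (range (\<lambda>x. \<Gamma> s x T \<xi>))"
proof -
  obtain C where "\<forall>x. \<Gamma> s x T \<xi> \<le> C"
    using local_densityD(5)[OF dens s, of "{\<xi>}"] \<open>\<xi> \<in> D\<close> by auto
  moreover have "\<forall>x. 0 \<le> \<Gamma> s x T \<xi>"
    using local_densityD(1)[OF dens s] \<open>\<xi> \<in> D\<close> by simp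
  ultimately show ?thesis
    unfolding bounded_iff by (intro exI[of _ C]) force
qed

lemma local_density_chapman_kolmogorov:
  assumes markov: "cont_strong_markov T0 M Fl Pm X" and dens: "local_density T0 Pm X D \<Gamma>"
    and "open D" "\<xi> \<in> D" and times: "0 < t" "t < s" "s < T" "T < T0"
  shows "\<Gamma> t x T \<xi> = (\<integral>\<omega>. \<Gamma> s (X s \<omega>) T \<xi> \<partial>Pm t x)"
proof -
  have s: "0 < s" "s < T" "T < T0" and t: "0 < t" "t < T" "T < T0"
    using times by auto
  obtain e where "0 < e" "cball \<xi> e \<subseteq> D"
    using \<open>open D\<close> \<open>\<xi> \<in> D\<close> open_contains_cball by blast
  obtain C where avg_bounds: "\<And>y r. 0 < r \<Longrightarrow> r \<le> e \<Longrightarrow> norm (ball_average (trans_prob Pm X s y T) \<xi> r) \<le> C"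
    using local_density_ball_average_bounded[OF dens \<open>open D\<close> s \<open>cball \<xi> e \<subseteq> D\<close>] by blast
  define r where "r n = e / real (Suc n)" for n
  have r: "0 < r n" "r n \<le> e" for n
    using \<open>0 < e\<close> by (simp_all add: r_def divide_le_eq)
  have r_lim: "filterlim r (at_right 0) sequentially"
    unfolding r_def using \<open>0 < e\<close> by (rule filterlim_divide_Suc_at_right)
  have X_meas: "X s \<in> borel_measurable (Pm t x)"
    using times by (intro cont_strong_markov_measurable[OF markov]) auto
  have "(\<lambda>n. ball_average (trans_prob Pm X t x T) \<xi> (r n)) \<longlonglongrightarrow> \<Gamma> t x T \<xi>"
    using local_density_ball_average_tendsto[OF dens \<open>open D\<close> \<open>\<xi> \<in> D\<close> t] r_lim by (rule filterlim_compose)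
  moreover have "ball_average (trans_prob Pm X t x T) \<xi> (r n) =
      (\<integral>\<omega>. ball_average (trans_prob Pm X s (X s \<omega>) T) \<xi> (r n) \<partial>Pm t x)" for n
    using times by (simp add: ball_average_def cont_strong_markov_chapman_kolmogorov[OF markov])
  moreover have "(\<lambda>n. \<integral>\<omega>. ball_average (trans_prob Pm X s (X s \<omega>) T) \<xi> (r n) \<partial>Pm t x)
      \<longlonglongrightarrow> (\<integral>\<omega>. \<Gamma> s (X s \<omega>) T \<xi> \<partial>Pm t x)"
  proof (rule integral_dominated_convergence[where w = "\<lambda>_. C"])
    show "(\<lambda>\<omega>. \<Gamma> s (X s \<omega>) T \<xi>) \<in> borel_measurable (Pm t x)"
      using X_meas local_density_borel_measurable[OF markov dens \<open>open D\<close> \<open>\<xi> \<in> D\<close> s]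
      by (rule measurable_compose)
    show "(\<lambda>\<omega>. ball_average (trans_prob Pm X s (X s \<omega>) T) \<xi> (r n)) \<in> borel_measurable (Pm t x)" for n
      using cont_strong_markov_ball_average_measurable[OF markov, of s T] s
      by (intro measurable_compose[OF X_meas]) auto
    show "integrable (Pm t x) (\<lambda>_. C)"
      using cont_strong_markovD(1)[OF markov] t by (simp add: prob_space.finite_measure finite_measure.integrable_const)
    show "AE \<omega> in Pm t x. (\<lambda>n. ball_average (trans_prob Pm X s (X s \<omega>) T) \<xi> (r n)) \<longlonglongrightarrow> \<Gamma> s (X s \<omega>) T \<xi>"
      using local_density_ball_average_tendsto[OF dens \<open>open D\<close> \<open>\<xi> \<in> D\<close> s] r_lim
      by (intro AE_I2) (rule filterlim_compose)
    show "AE \<omega> in Pm t x. norm (ball_average (trans_prob Pm X s (X s \<omega>) T) \<xi> (r n)) \<le> C" for n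
      using avg_bounds r by simp
  qed
  ultimately show ?thesis
    using LIMSEQ_unique by fastforce
qed

theorem mainTheorem10:
  fixes T0 :: real and P :: "('d::finite) set" and B :: "real^'d^'d" and D :: "(real^'d) set"
    and M :: "'w measure" and Fl :: "real \<Rightarrow> real \<Rightarrow> 'w measure"
    and Pm :: "real \<Rightarrow> real^'d \<Rightarrow> 'w measure" and X :: "real \<Rightarrow> 'w \<Rightarrow> real^'d"
    and a :: "'d \<Rightarrow> 'd \<Rightarrow> ('d::finite) st \<Rightarrow> real" and b :: "'d \<Rightarrow> ('d::finite) st \<Rightarrow> real"
    and N :: nat and \<alpha> Mc :: real
    and \<Gamma> :: "real \<Rightarrow> real^'d \<Rightarrow> real \<Rightarrow> real^'d \<Rightarrow> real"
  assumes T0: "0 < T0"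
    and P: "P \<noteq> {}"
    and D: "open D" "connected D"
    and H: "hoermander_H P B"
    and R: "assumption_R T0 P B D a b N \<alpha> Mc"
    and F: "assumption_F T0 Pm X D"
    and markov: "cont_strong_markov T0 M Fl Pm X"
    and diff: "local_diffusion T0 Pm X P B D a b"
    and dens: "local_density T0 Pm X D \<Gamma>"
    and t: "0 < t" "t < T" "T < T0"
    and \<xi>: "\<xi> \<in> D"
  shows "bounded (range (\<lambda>x. \<Gamma> t x T \<xi>)) \<and>
         (\<lambda>x. \<Gamma> t x T \<xi>) \<in> borel_measurable borel \<and>
         (\<forall>s x. t < s \<and> s < T \<longrightarrow> \<Gamma> t x T \<xi> = (\<integral>\<omega>. \<Gamma> s (X s \<omega>) T \<xi> \<partial>(Pm t x)))"
proof (intro conjI allI impI)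
  show "bounded (range (\<lambda>x. \<Gamma> t x T \<xi>))"
    by (rule local_density_bounded[OF dens \<xi> t])
  show "(\<lambda>x. \<Gamma> t x T \<xi>) \<in> borel_measurable borel"
    by (rule local_density_borel_measurable[OF markov dens D(1) \<xi> t])
  fix s x
  assume "t < s \<and> s < T"
  then show "\<Gamma> t x T \<xi> = (\<integral>\<omega>. \<Gamma> s (X s \<omega>) T \<xi> \<partial>(Pm t x))"
    using local_density_chapman_kolmogorov[OF markov dens D(1) \<xi> t(1)] t(3) by blast
qed

end
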